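(* For every $n\ge2$ we have $L_n\subseteq C_n$.
   Context: $C_n$ is the set of all numbers $f$ such that there exist $n$ distinct circles in the Euclidean plane, not in general position, with every two of the circles having at least one common point, whose union has complement in the plane consisting of exactly $f$ connected components. $L_n$ is the set of all numbers of connected components of the complement in the plane of the union of $n$ distinct lines not in general position (no further condition on intersections). Circles are in general position if no two are tangent and no three pass through a common point; lines are in general position if no two are parallel and no three pass through a common point. *)

theory Defs
  imports "HOL-Analysis.Analysis"
begin

text \<open>The Euclidean plane is modelled by the type complex.
  Circles and lines are represented as point sets, so "n distinct circles/lines"
  is a set of n such point sets.\<close>

definition is_circle :: "complex set \<Rightarrow> bool" where
  "is_circle S \<longleftrightarrow> (\<exists>c r. r > 0 \<and> S = sphere c r)"

definition is_line :: "complex set \<Rightarrow> bool" where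
  "is_line L \<longleftrightarrow> (\<exists>a b. a \<noteq> b \<and> L = affine hull {a, b})"

definition circles_tangent :: "complex set \<Rightarrow> complex set \<Rightarrow> bool" where
  "circles_tangent C1 C2 \<longleftrightarrow> C1 \<noteq> C2 \<and> (\<exists>!p. p \<in> C1 \<inter> C2)"

definition circles_general_position :: "complex set set \<Rightarrow> bool" where
  "circles_general_position F \<longleftrightarrow>
     (\<forall>C1\<in>F. \<forall>C2\<in>F. \<not> circles_tangent C1 C2) \<and>
     (\<forall>C1\<in>F. \<forall>C2\<in>F. \<forall>C3\<in>F. C1 \<noteq> C2 \<and> C1 \<noteq> C3 \<and> C2 \<noteq> C3 \<longrightarrow> C1 \<inter> C2 \<inter> C3 = {})"

definition lines_parallel :: "complex set \<Rightarrow> complex set \<Rightarrow> bool" where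
  "lines_parallel L1 L2 \<longleftrightarrow> (\<exists>v. L2 = (\<lambda>x. x + v) ` L1)"

definition lines_general_position :: "complex set set \<Rightarrow> bool" where
  "lines_general_position F \<longleftrightarrow>
     (\<forall>L1\<in>F. \<forall>L2\<in>F. L1 \<noteq> L2 \<longrightarrow> \<not> lines_parallel L1 L2) \<and>
     (\<forall>L1\<in>F. \<forall>L2\<in>F. \<forall>L3\<in>F. L1 \<noteq> L2 \<and> L1 \<noteq> L3 \<and> L2 \<noteq> L3 \<longrightarrow> L1 \<inter> L2 \<inter> L3 = {})"

definition num_regions :: "complex set \<Rightarrow> nat" where
  "num_regions U = card (components (- U))"

definition C_set :: "nat \<Rightarrow> nat set" where
  "C_set n = {f. \<exists>F. card F = n \<and> (\<forall>C\<in>F. is_circle C) \<and>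
       \<not> circles_general_position F \<and>
       (\<forall>C1\<in>F. \<forall>C2\<in>F. C1 \<inter> C2 \<noteq> {}) \<and>
       finite (components (- \<Union>F)) \<and> f = num_regions (\<Union>F)}"

definition L_set :: "nat \<Rightarrow> nat set" where
  "L_set n = {f. \<exists>F. card F = n \<and> (\<forall>L\<in>F. is_line L) \<and>
       \<not> lines_general_position F \<and>
       finite (components (- \<Union>F)) \<and> f = num_regions (\<Union>F)}"

end

theory Submission
  imports Defs
begin

text \<open>Choose a point Q on none of the lines (finitely many lines have empty interior) and
  apply z \<mapsto> 1/(z - Q). It maps each line onto a circle through 0 with 0 deleted, and it is a
  homeomorphism from the complement of the lines minus Q onto the complement of the completed
  circles. Deleting one point from an open planar set does not change its number of components,
  so the number of regions is preserved. All image circles pass through 0: for n \<ge> 3 three of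
  them are concurrent, and for n = 2 the two lines must be parallel, hence disjoint, so their
  images meet only in 0 and are tangent.\<close>

lemma components_homeomorphism_image:
  assumes "homeomorphism S T f g"
  shows "components T = image f ` components S"
proof -
  have "T = f ` S"
    using assms homeomorphism_image1 by blast
  then show ?thesis
    unfolding components_def using connected_component_set_homeomorphism[OF assms]
    by (auto simp: image_image)
qed

lemma components_homeomorphism_eqpoll:
  assumes "homeomorphism S T f g"
  shows "components S \<approx> components T"
proof -
  have "inj_on f S"
    using assms by (metis homeomorphism_apply1 inj_on_inverseI)
  then have "inj_on (image f) (components S)"
    by (meson Pow_iff in_components_subset inj_on_image_Pow inj_on_subset subsetI)
  then show ?thesis
    unfolding eqpoll_def components_homeomorphism_image[OF assms] by (blast intro: inj_on_imp_bij_betw)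
qed

lemma components_delete_point:
  fixes a :: "'a::euclidean_space"
  assumes "open S" "2 \<le> DIM('a)" and C: "C \<in> components S"
  shows "C - {a} \<in> components (S - {a})"
  unfolding in_components_maximal
proof (intro conjI allI impI)
  have "open C" "connected C" "C \<noteq> {}"
    using assms open_components in_components_connected in_components_nonempty by blast+
  then show "connected (C - {a})"
    using assms(2) by (simp add: connected_open_delete)
  show "C - {a} \<noteq> {}"
  proof
    assume "C - {a} = {}"
    with \<open>C \<noteq> {}\<close> have "C = {a}" by blast
    with \<open>open C\<close> show False by (simp add: not_open_singleton)
  qed
  show "C - {a} \<subseteq> S - {a}"
    using C in_components_subset by blast
  fix D assume "D \<noteq> {} \<and> C - {a} \<subseteq> D \<and> D \<subseteq> S - {a} \<and> connected D"
  then have D: "C - {a} \<subseteq> D" "D \<subseteq> S - {a}" "connected D"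
    by auto
  with \<open>C - {a} \<noteq> {}\<close> have "C \<inter> D \<noteq> {}"
    by blast
  with D have "D \<subseteq> C"
    using components_maximal[OF C, of D] by blast
  with D show "D = C - {a}"
    by blast
qed

lemma components_delete_point_eqpoll:
  fixes a :: "'a::euclidean_space"
  assumes "open S" "2 \<le> DIM('a)"
  shows "components S \<approx> components (S - {a})"
  unfolding eqpoll_def bij_betw_def
proof (intro exI conjI)
  show "inj_on (\<lambda>C. C - {a}) (components S)"
  proof (rule inj_onI)
    fix C1 C2 assume C: "C1 \<in> components S" "C2 \<in> components S" "C1 - {a} = C2 - {a}"
    then have "C1 - {a} \<noteq> {}"
      using components_delete_point[OF assms] in_components_nonempty by blast
    with C show "C1 = C2"
      using components_eq by blast
  qed
  show "(\<lambda>C. C - {a}) ` components S = components (S - {a})"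
  proof (intro equalityI subsetI)
    fix D assume D: "D \<in> components (S - {a})"
    then obtain x where x: "x \<in> D"
      using in_components_nonempty by blast
    then have "x \<in> S" "x \<noteq> a"
      using D in_components_subset by blast+
    then have C: "connected_component_set S x \<in> components S"
      by (simp add: componentsI)
    have "x \<in> connected_component_set S x - {a}"
      using \<open>x \<in> S\<close> \<open>x \<noteq> a\<close> by simp
    then have "D = connected_component_set S x - {a}"
      using components_eq[OF D components_delete_point[OF assms C]] x by blast
    with C show "D \<in> (\<lambda>C. C - {a}) ` components S" by blast
  qed (use assms components_delete_point in blast)
qed

lemma Im_mult_cnj_eq_0_iff:
  fixes w d :: complex
  assumes "d \<noteq> 0"
  shows "Im (w * cnj d) = 0 \<longleftrightarrow> (\<exists>u. w = u *\<^sub>R d)"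
proof
  assume "Im (w * cnj d) = 0"
  moreover have "(Re d)\<^sup>2 + (Im d)\<^sup>2 \<noteq> 0"
    using assms by (simp add: complex_eq_iff sum_power2_eq_zero_iff)
  ultimately have "w = (Re (w * cnj d) / ((Re d)\<^sup>2 + (Im d)\<^sup>2)) *\<^sub>R d"
    by (simp add: complex_eq_iff field_simps power2_eq_square)
  then show "\<exists>u. w = u *\<^sub>R d" ..
qed auto

lemma is_line_eq_Re_mult_cnj:
  assumes "is_line L"
  obtains \<nu> c where "\<nu> \<noteq> 0" "L = {z. Re (z * cnj \<nu>) = c}"
proof -
  obtain a b where "a \<noteq> b" and L: "L = affine hull {a, b}"
    using assms unfolding is_line_def by blast
  then have "b - a \<noteq> 0" by simp
  have "z \<in> L \<longleftrightarrow> Re (z * cnj (\<i> * (b - a))) = Re (a * cnj (\<i> * (b - a)))" for z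
  proof -
    have "z \<in> L \<longleftrightarrow> (\<exists>u. z - a = u *\<^sub>R (b - a))"
      unfolding L affine_hull_2_alt by (auto simp: image_iff diff_eq_eq)
    also have "\<dots> \<longleftrightarrow> Im ((z - a) * cnj (b - a)) = 0"
      by (rule Im_mult_cnj_eq_0_iff[OF \<open>b - a \<noteq> 0\<close>, symmetric])
    also have "\<dots> \<longleftrightarrow> Re (z * cnj (\<i> * (b - a))) = Re (a * cnj (\<i> * (b - a)))"
      by (simp add: algebra_simps)
    finally show ?thesis .
  qed
  moreover have "\<i> * (b - a) \<noteq> 0"
    using \<open>b - a \<noteq> 0\<close> by simp
  ultimately show thesis
    using that by blast
qed

lemma lines_parallel_disjoint:
  assumes "is_line L1" "lines_parallel L1 L2" "L1 \<noteq> L2"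
  shows "L1 \<inter> L2 = {}"
proof -
  obtain \<nu> c where L1: "L1 = {z. Re (z * cnj \<nu>) = c}"
    using assms(1) by (rule is_line_eq_Re_mult_cnj)
  obtain v where "L2 = (\<lambda>x. x + v) ` L1"
    using assms(2) unfolding lines_parallel_def by blast
  then have "z \<in> L2 \<longleftrightarrow> z - v \<in> L1" for z
    by (force simp: image_iff diff_eq_eq)
  then have L2: "L2 = {z. Re (z * cnj \<nu>) = c + Re (v * cnj \<nu>)}"
    unfolding L1 by (auto simp: algebra_simps)
  with assms(3) have "Re (v * cnj \<nu>) \<noteq> 0"
    unfolding L1 by auto
  then show ?thesis
    unfolding L1 L2 by auto
qed

lemma is_line_closed_empty_interior:
  assumes "is_line L"
  shows "closed L" "interior L = {}"
proof -
  obtain a b where "L = affine hull {a, b :: complex}"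
    using assms unfolding is_line_def by blast
  moreover have "card {a, b} < DIM(complex) + 1"
    by (simp add: card_insert_if)
  ultimately show "closed L" "interior L = {}"
    by (simp_all add: empty_interior_affine_hull)
qed

lemma interior_Union_closed_empty_interior:
  fixes F :: "'a::topological_space set set"
  assumes "finite F" "\<And>S. S \<in> F \<Longrightarrow> closed S \<and> interior S = {}"
  shows "interior (\<Union>F) = {}"
  using assms
proof (induction F rule: finite_induct)
  case (insert S F)
  then have "interior (S \<union> \<Union>F) = interior S"
    by (intro interior_closed_Un_empty_interior) auto
  with insert show ?case by simp
qed simp

lemma ex_not_in_Union_lines:
  assumes "finite F" "\<forall>L\<in>F. is_line L"
  obtains Q where "Q \<notin> \<Union>F"
proof -
  have "interior (\<Union>F) = {}"
    using assms(1)
    by (rule interior_Union_closed_empty_interior) (use assms(2) is_line_closed_empty_interior in blast)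
  then have "\<Union>F \<noteq> UNIV"
    by auto
  with that show thesis
    by blast
qed

text \<open>The point at infinity of A is mapped to 0, which is therefore added to the image.\<close>

definition inverted :: "complex \<Rightarrow> complex set \<Rightarrow> complex set" where
  "inverted Q A = (\<lambda>z. inverse (z - Q)) ` A \<union> {0}"

lemma mem_inverted_iff:
  assumes "Q \<notin> A"
  shows "u \<in> inverted Q A \<longleftrightarrow> u = 0 \<or> inverse u + Q \<in> A"
proof (cases "u = 0")
  case False
  have "u \<in> (\<lambda>z. inverse (z - Q)) ` A \<longleftrightarrow> inverse u + Q \<in> A"
    by (force simp: image_iff False)
  then show ?thesis
    unfolding inverted_def using False by blast
qed (simp add: inverted_def)

lemma inverted_Int:
  assumes "Q \<notin> A" "Q \<notin> B"
  shows "inverted Q A \<inter> inverted Q B = inverted Q (A \<inter> B)"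
  using assms by (auto simp: mem_inverted_iff)

lemma inverted_Union:
  assumes "F \<noteq> {}" "Q \<notin> \<Union>F"
  shows "\<Union>(inverted Q ` F) = inverted Q (\<Union>F)"
  using assms by (auto simp: mem_inverted_iff)

lemma inj_on_inverted:
  assumes "Q \<notin> \<Union>F"
  shows "inj_on (inverted Q) F"
proof (rule inj_onI)
  fix A B assume "A \<in> F" "B \<in> F" and eq: "inverted Q A = inverted Q B"
  with assms have "z \<in> A \<longleftrightarrow> z \<in> B" for z
    using mem_inverted_iff[of Q _ "inverse (z - Q)"] by (cases "z = Q") auto
  then show "A = B" by blast
qed

lemma homeomorphism_complement_inverted:
  assumes "Q \<notin> A"
  shows "homeomorphism (- A - {Q}) (- inverted Q A) (\<lambda>z. inverse (z - Q)) (\<lambda>w. inverse w + Q)"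
proof (rule homeomorphism_of_subsets)
  show "homeomorphism (- {Q}) (- {0}) (\<lambda>z. inverse (z - Q)) (\<lambda>w. inverse w + Q)"
    by (rule homeomorphismI) (auto intro!: continuous_intros)
  show "(\<lambda>z. inverse (z - Q)) ` (- A - {Q}) = - inverted Q A"
    using assms by (force simp: mem_inverted_iff image_iff)
qed (auto simp: inverted_def)

lemma Collect_quadric_eq_sphere:
  fixes \<nu> :: complex and c :: real
  assumes "c \<noteq> 0"
  shows "{u. c * (cmod u)\<^sup>2 = Re (u * \<nu>)} = sphere (cnj \<nu> / of_real (2 * c)) (cmod \<nu> / (2 * \<bar>c\<bar>))"
proof (intro set_eqI)
  fix u
  have "u \<in> sphere (cnj \<nu> / of_real (2 * c)) (cmod \<nu> / (2 * \<bar>c\<bar>)) \<longleftrightarrow>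
      (dist (cnj \<nu> / of_real (2 * c)) u)\<^sup>2 = (cmod \<nu> / (2 * \<bar>c\<bar>))\<^sup>2"
    by (simp add: power2_eq_iff_nonneg)
  also have "\<dots> \<longleftrightarrow> (Re \<nu> / (2 * c) - Re u)\<^sup>2 + (- Im \<nu> / (2 * c) - Im u)\<^sup>2 = ((Re \<nu>)\<^sup>2 + (Im \<nu>)\<^sup>2) / (4 * c\<^sup>2)"
    by (simp add: dist_norm cmod_power2 power_divide power_mult_distrib)
  also have "\<dots> \<longleftrightarrow> c * ((Re u)\<^sup>2 + (Im u)\<^sup>2) = Re u * Re \<nu> - Im u * Im \<nu>"
    using assms by (simp add: field_simps power2_eq_square) algebra
  finally show "u \<in> {u. c * (cmod u)\<^sup>2 = Re (u * \<nu>)} \<longleftrightarrow> u \<in> sphere (cnj \<nu> / of_real (2 * c)) (cmod \<nu> / (2 * \<bar>c\<bar>))"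
    by (simp add: cmod_power2)
qed

lemma is_circle_inverted:
  assumes "is_line L" "Q \<notin> L"
  shows "is_circle (inverted Q L)"
proof -
  obtain \<nu> c where "\<nu> \<noteq> 0" and L: "L = {z. Re (z * cnj \<nu>) = c}"
    using assms(1) by (rule is_line_eq_Re_mult_cnj)
  define c' where "c' = c - Re (Q * cnj \<nu>)"
  have "c' \<noteq> 0"
    using assms(2) L c'_def by auto
  have "u \<in> inverted Q L \<longleftrightarrow> c' * (cmod u)\<^sup>2 = Re (u * \<nu>)" for u
  proof (cases "u = 0")
    case False
    have "u \<in> inverted Q L \<longleftrightarrow> inverse u + Q \<in> L"
      using mem_inverted_iff[OF assms(2)] False by simp
    also have "\<dots> \<longleftrightarrow> Re (inverse u * cnj \<nu>) = c'"
      unfolding L c'_def by (simp add: algebra_simps)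
    also have "Re (inverse u * cnj \<nu>) = Re (u * \<nu>) / (cmod u)\<^sup>2"
      by (simp add: inverse_eq_divide Re_divide cmod_power2 field_simps)
    finally show ?thesis
      using False by (auto simp: divide_eq_eq mult.commute)
  qed (simp add: inverted_def)
  then have "inverted Q L = sphere (cnj \<nu> / of_real (2 * c')) (cmod \<nu> / (2 * \<bar>c'\<bar>))"
    using Collect_quadric_eq_sphere[OF \<open>c' \<noteq> 0\<close>] by blast
  moreover have "cmod \<nu> / (2 * \<bar>c'\<bar>) > 0"
    using \<open>\<nu> \<noteq> 0\<close> \<open>c' \<noteq> 0\<close> by simp
  ultimately show ?thesis
    unfolding is_circle_def by blast
qed

lemma components_complement_inverted_eqpoll:
  assumes "closed A" "Q \<notin> A"
  shows "components (- A) \<approx> components (- inverted Q A)"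
proof -
  have "components (- A) \<approx> components (- A - {Q})"
    using assms(1) by (intro components_delete_point_eqpoll) auto
  also have "\<dots> \<approx> components (- inverted Q A)"
    using homeomorphism_complement_inverted[OF assms(2)] by (rule components_homeomorphism_eqpoll)
  finally show ?thesis .
qed

lemma not_circles_general_position_inverted:
  assumes lines: "\<forall>L\<in>F. is_line L" and Q: "Q \<notin> \<Union>F"
    and "2 \<le> card F" and not_gp: "\<not> lines_general_position F"
  shows "\<not> circles_general_position (inverted Q ` F)"
proof -
  have inj: "inj_on (inverted Q) F"
    using Q by (rule inj_on_inverted)
  consider "3 \<le> card F" | "card F = 2"
    using \<open>2 \<le> card F\<close> by linarith
  then show ?thesis
  proof cases
    case 1
    then obtain T where "T \<subseteq> F" "card T = 3"
      by (rule obtain_subset_with_card_n)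
    then obtain L1 L2 L3 where L: "L1 \<in> F" "L2 \<in> F" "L3 \<in> F" "L1 \<noteq> L2" "L1 \<noteq> L3" "L2 \<noteq> L3"
      by (auto simp: card_3_iff)
    then have "inverted Q L1 \<noteq> inverted Q L2" "inverted Q L1 \<noteq> inverted Q L3"
        "inverted Q L2 \<noteq> inverted Q L3"
      using inj by (simp_all add: inj_on_eq_iff)
    moreover have "0 \<in> inverted Q L1 \<inter> inverted Q L2 \<inter> inverted Q L3"
      by (simp add: inverted_def)
    ultimately show ?thesis
      using L(1-3) unfolding circles_general_position_def by blast
  next
    case 2
    then obtain L1 L2 where "F = {L1, L2}" "L1 \<noteq> L2"
      by (meson card_2_iff)
    with not_gp obtain A B where AB: "A \<in> F" "B \<in> F" "A \<noteq> B" "lines_parallel A B"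
      unfolding lines_general_position_def by auto
    then have "A \<inter> B = {}"
      using lines lines_parallel_disjoint by blast
    then have "inverted Q A \<inter> inverted Q B = {0}"
      using AB Q inverted_Int[of Q A B] by (auto simp: inverted_def)
    moreover have "inverted Q A \<noteq> inverted Q B"
      using inj AB by (meson inj_onD)
    ultimately have "circles_tangent (inverted Q A) (inverted Q B)"
      unfolding circles_tangent_def by auto
    with AB show ?thesis
      unfolding circles_general_position_def by blast
  qed
qed

theorem lemma4:
  fixes n :: nat
  assumes "n \<ge> 2"
  shows "L_set n \<subseteq> C_set n"
proof
  fix f assume "f \<in> L_set n"
  then obtain F where F: "card F = n" "\<forall>L\<in>F. is_line L" "\<not> lines_general_position F"
      "finite (components (- \<Union>F))" "f = num_regions (\<Union>F)"
    unfolding L_set_def by blast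
  with assms have "finite F" "F \<noteq> {}"
    by (auto intro: card_ge_0_finite)
  obtain Q where Q: "Q \<notin> \<Union>F"
    using \<open>finite F\<close> F(2) by (rule ex_not_in_Union_lines)
  have "closed (\<Union>F)"
    using \<open>finite F\<close> F(2) by (simp add: closed_Union is_line_closed_empty_interior)
  then have "components (- \<Union>F) \<approx> components (- \<Union>(inverted Q ` F))"
    unfolding inverted_Union[OF \<open>F \<noteq> {}\<close> Q] using Q by (rule components_complement_inverted_eqpoll)
  then obtain \<beta> where "bij_betw \<beta> (components (- \<Union>F)) (components (- \<Union>(inverted Q ` F)))"
    unfolding eqpoll_def by blast
  then have "finite (components (- \<Union>(inverted Q ` F)))" "num_regions (\<Union>(inverted Q ` F)) = f"
    using F(4,5) unfolding num_regions_def by (simp_all add: bij_betw_finite bij_betw_same_card)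
  moreover have "card (inverted Q ` F) = n"
    using F(1) inj_on_inverted[OF Q] by (simp add: card_image)
  moreover have "\<forall>C\<in>inverted Q ` F. is_circle C"
    using F(2) Q is_circle_inverted by blast
  moreover have "\<forall>C1\<in>inverted Q ` F. \<forall>C2\<in>inverted Q ` F. C1 \<inter> C2 \<noteq> {}"
    by (auto simp: inverted_def)
  moreover have "\<not> circles_general_position (inverted Q ` F)"
    using not_circles_general_position_inverted F(1-3) Q assms by blast
  ultimately show "f \<in> C_set n"
    unfolding C_set_def by blast
qed

end
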